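(* Let $m\ge 2$, $d_x,d_y\ge 1$, and let $\mathscr{G}=([m],\mathcal{E})$ be an undirected, connected, simple graph. Let $W\in\mathbb{R}^{m\times m}$ be symmetric and row stochastic with $W_{ij}>0$ if and only if $(i,j)\in\mathcal{E}$, $W_{ii}>0$ for all $i$, and with eigenvalues $-1<\lambda_m\le\dots\le\lambda_2<\lambda_1=1$. Let $U=\sqrt{I_m-W}$ denote the positive semidefinite square root of $I_m-W$. For each $i\in[m]$ let $f_i:\mathbb{R}^{d_x}\times\mathbb{R}^{d_y}\to\mathbb{R}$ be differentiable, with $f_i(\cdot,y)$ $\mu_x$-strongly convex for every $y$ and $f_i(x,\cdot)$ $\mu_y$-strongly concave for every $x$ (for some $\mu_x,\mu_y>0$), and let $g:\mathbb{R}^{d_x}\to\mathbb{R}$, $r:\mathbb{R}^{d_y}\to\mathbb{R}$ be proper, convex, possibly non-smooth functions. For $\mathbf{x}=(x^1,\dots,x^m)\in\mathbb{R}^{md_x}$, $\mathbf{y}=(y^1,\dots,y^m)\in\mathbb{R}^{md_y}$ put $F(\mathbf{x},\mathbf{y})=\sum_{i=1}^m f_i(x^i,y^i)$, $G(\mathbf{x})=\sum_{i=1}^m g(x^i)$, $R(\mathbf{y})=\sum_{i=1}^m r(y^i)$, and consider the consensus-constrained saddle point problem $$\min_{\mathbf{x}\in\mathbb{R}^{md_x}}\max_{\mathbf{y}\in\mathbb{R}^{md_y}} F(\mathbf{x},\mathbf{y})+G(\mathbf{x})-R(\mathbf{y})\quad\text{s.t.}\quad (U\otimes I_{d_x})\mathbf{x}=0,\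 (U\otimes I_{d_y})\mathbf{y}=0 \qquad (\mathrm{P})$$ and the Lagrangian $$\mathcal{L}(\mathbf{x},\mathbf{y};S^{\mathbf{x}},S^{\mathbf{y}})=F(\mathbf{x},\mathbf{y})+G(\mathbf{x})-R(\mathbf{y})+\langle S^{\mathbf{x}},(U\otimes I_{d_x})\mathbf{x}\rangle+\langle S^{\mathbf{y}},(U\otimes I_{d_y})\mathbf{y}\rangle,$$ with $S^{\mathbf{x}}\in\mathbb{R}^{md_x}$, $S^{\mathbf{y}}\in\mathbb{R}^{md_y}$, together with the unconstrained saddle point problem $$\min_{\mathbf{x}\in\mathbb{R}^{md_x},\,S^{\mathbf{y}}\in\mathbb{R}^{md_y}}\ \max_{\mathbf{y}\in\mathbb{R}^{md_y},\,S^{\mathbf{x}}\in\mathbb{R}^{md_x}}\ \mathcal{L}(\mathbf{x},\mathbf{y};S^{\mathbf{x}},S^{\mathbf{y}}). \qquad (\mathrm{L})$$ Then $(\mathbf{x}^\star,\mathbf{y}^\star)$ is a saddle point of $(\mathrm{P})$ if and only if there exist $\tilde S^{\mathbf{x}}\in\mathbb{R}^{md_x}$, $\tilde S^{\mathbf{y}}\in\mathbb{R}^{md_y}$ such that $(\mathbf{x}^\star,\mathbf{y}^\star,\tilde S^{\mathbf{x}},\tilde S^{\mathbf{y}})$ is a saddle point of $(\mathrm{L})$.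
   Context: A saddle point of $(\mathrm{P})$ is a pair $(\mathbf{x}^\star,\mathbf{y}^\star)$ of feasible points (satisfying the two consensus constraints) such that $\mathbf{x}^\star$ minimizes $F(\cdot,\mathbf{y}^\star)+G(\cdot)-R(\mathbf{y}^\star)$ over feasible $\mathbf{x}$ and $\mathbf{y}^\star$ maximizes $F(\mathbf{x}^\star,\cdot)+G(\mathbf{x}^\star)-R(\cdot)$ over feasible $\mathbf{y}$. A saddle point of $(\mathrm{L})$ is a point $(\mathbf{x}^\star,\mathbf{y}^\star,\tilde S^{\mathbf{x}},\tilde S^{\mathbf{y}})$ such that $(\mathbf{x}^\star,\tilde S^{\mathbf{y}})$ minimizes $\mathcal{L}(\cdot,\mathbf{y}^\star;\tilde S^{\mathbf{x}},\cdot)$ and $(\mathbf{y}^\star,\tilde S^{\mathbf{x}})$ maximizes $\mathcal{L}(\mathbf{x}^\star,\cdot;\cdot,\tilde S^{\mathbf{y}})$. $\otimes$ denotes the Kronecker product and $I_d$ the $d\times d$ identity. *)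

theory Defs
  imports "HOL-Analysis.Analysis"
begin

text \<open>Block vectors in R^{m d} are represented as real^'d^'m (block i = component i).
  The Kronecker action (U \<otimes> I_d) x has block i equal to sum_j U_ij x^j.\<close>

definition kron_id :: "real^'m^'m \<Rightarrow> real^'d^'m \<Rightarrow> real^'d^'m" where
  "kron_id U x = (\<chi> i. \<Sum>j\<in>UNIV. U $ i $ j *\<^sub>R x $ j)"

definition strongly_convex :: "real \<Rightarrow> ('a::real_inner \<Rightarrow> real) \<Rightarrow> bool" where
  "strongly_convex mu f \<longleftrightarrow> convex_on UNIV (\<lambda>x. f x - mu / 2 * (norm x)\<^sup>2)"

definition strongly_concave :: "real \<Rightarrow> ('a::real_inner \<Rightarrow> real) \<Rightarrow> bool" where
  "strongly_concave mu f \<longleftrightarrow> strongly_convex mu (\<lambda>x. - f x)"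

definition is_eigenvalue :: "real^'n^'n \<Rightarrow> real \<Rightarrow> bool" where
  "is_eigenvalue A l \<longleftrightarrow> (\<exists>v. v \<noteq> 0 \<and> A *v v = l *\<^sub>R v)"

definition saddle_P ::
  "real^'m^'m \<Rightarrow> (real^'dx^'m \<Rightarrow> real^'dy^'m \<Rightarrow> real) \<Rightarrow> real^'dx^'m \<Rightarrow> real^'dy^'m \<Rightarrow> bool" where
  "saddle_P U Phi xs ys \<longleftrightarrow>
     kron_id U xs = 0 \<and> kron_id U ys = 0 \<and>
     (\<forall>x. kron_id U x = 0 \<longrightarrow> Phi xs ys \<le> Phi x ys) \<and>
     (\<forall>y. kron_id U y = 0 \<longrightarrow> Phi xs y \<le> Phi xs ys)"

definition lagr ::
  "real^'m^'m \<Rightarrow> (real^'dx^'m \<Rightarrow> real^'dy^'m \<Rightarrow> real) \<Rightarrow> real^'dx^'m \<Rightarrow> real^'dy^'m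
    \<Rightarrow> real^'dx^'m \<Rightarrow> real^'dy^'m \<Rightarrow> real" where
  "lagr U Phi x y Sx Sy = Phi x y + inner Sx (kron_id U x) + inner Sy (kron_id U y)"

definition saddle_L ::
  "real^'m^'m \<Rightarrow> (real^'dx^'m \<Rightarrow> real^'dy^'m \<Rightarrow> real) \<Rightarrow> real^'dx^'m \<Rightarrow> real^'dy^'m
    \<Rightarrow> real^'dx^'m \<Rightarrow> real^'dy^'m \<Rightarrow> bool" where
  "saddle_L U Phi xs ys Sxs Sys \<longleftrightarrow>
     (\<forall>x Sy. lagr U Phi xs ys Sxs Sys \<le> lagr U Phi x ys Sxs Sy) \<and>
     (\<forall>y Sx. lagr U Phi xs y Sx Sys \<le> lagr U Phi xs ys Sxs Sys)"

end

theory Submission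
  imports Defs
begin

text \<open>A saddle point of (L) is feasible, since otherwise moving a multiplier along the constraint
  residual would push the Lagrangian past its saddle value; feasibility then makes it a saddle
  point of (P). Conversely, x* minimises the convex function \<Phi>(., y*) on the kernel of L.
  Separating the origin from the convex set {(L x, t) | t > \<Phi>(x, y*) - \<Phi>(x*, y*)} by a
  hyperplane whose normal lies in the span of that set, hence in range L \<times> \<real>, rules out a
  vertical hyperplane, and the normal of a non-vertical one is a Lagrange multiplier for x*;
  symmetrically for y*.\<close>

lemma convex_on_power2_norm: "convex_on UNIV (\<lambda>x::'a::real_normed_vector. (norm x)\<^sup>2)"
proof (rule convex_onI)
  fix t :: real and x y :: 'a assume t: "0 < t" "t < 1"
  have "norm ((1 - t) *\<^sub>R x + t *\<^sub>R y) \<le> (1 - t) * norm x + t * norm y"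
    using t norm_triangle_ineq[of "(1 - t) *\<^sub>R x" "t *\<^sub>R y"] by simp
  then have "(norm ((1 - t) *\<^sub>R x + t *\<^sub>R y))\<^sup>2 \<le> ((1 - t) * norm x + t * norm y)\<^sup>2"
    by (simp add: power_mono)
  also have "\<dots> \<le> (1 - t) * (norm x)\<^sup>2 + t * (norm y)\<^sup>2"
    using convex_onD[OF convex_power2, of t "norm x" "norm y"] t by (simp add: algebra_simps)
  finally show "(norm ((1 - t) *\<^sub>R x + t *\<^sub>R y))\<^sup>2 \<le> (1 - t) * (norm x)\<^sup>2 + t * (norm y)\<^sup>2" .
qed simp

lemma strongly_convex_imp_convex_on:
  assumes "strongly_convex mu f" "0 \<le> mu"
  shows "convex_on UNIV f"
proof -
  have "convex_on UNIV (\<lambda>x. (f x - mu / 2 * (norm x)\<^sup>2) + mu / 2 * (norm x)\<^sup>2)"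
    using assms convex_on_power2_norm unfolding strongly_convex_def
    by (intro convex_on_add convex_on_cmul) auto
  then show ?thesis by simp
qed

lemma strongly_concave_imp_concave_on:
  assumes "strongly_concave mu f" "0 \<le> mu"
  shows "concave_on UNIV f"
  using assms strongly_convex_imp_convex_on
  unfolding strongly_concave_def concave_on_def by blast

lemma convex_on_compose_linear:
  assumes "convex_on UNIV h" "linear p"
  shows "convex_on UNIV (\<lambda>x. h (p x))"
  using assms unfolding convex_on_def by (simp add: linear_add linear_scale)

lemma convex_on_sum_fun:
  assumes "finite I" "convex S" "\<And>i. i \<in> I \<Longrightarrow> convex_on S (F i)"
  shows "convex_on S (\<lambda>x. \<Sum>i\<in>I. F i x)"
  using assms(1,3)
proof (induction I rule: finite_induct)
  case empty
  then show ?case using \<open>convex S\<close> by (simp add: convex_on_const)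
next
  case (insert a I)
  then show ?case by (simp add: convex_on_add)
qed

lemma convex_on_sum_blocks:
  fixes F :: "'m::finite \<Rightarrow> 'a::real_normed_vector \<Rightarrow> real"
  assumes "\<And>i. convex_on UNIV (F i)"
  shows "convex_on UNIV (\<lambda>x::'a^'m. \<Sum>i\<in>UNIV. F i (x $ i))"
  using assms convex_on_compose_linear[OF _ bounded_linear.linear[OF bounded_linear_vec_nth]]
  by (intro convex_on_sum_fun) auto

lemma concave_on_sum_blocks:
  fixes F :: "'m::finite \<Rightarrow> 'a::real_normed_vector \<Rightarrow> real"
  assumes "\<And>i. concave_on UNIV (F i)"
  shows "concave_on UNIV (\<lambda>x::'a^'m. \<Sum>i\<in>UNIV. F i (x $ i))"
  using convex_on_sum_blocks[of "\<lambda>i a. - F i a"] assms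
  unfolding concave_on_def by (simp add: sum_negf)

lemma convex_strict_epigraph:
  assumes "convex_on UNIV h"
  shows "convex {p. h (fst p) < snd p}"
proof (rule convexI)
  fix p q :: "'a \<times> real" and u v :: real
  assume p: "p \<in> {p. h (fst p) < snd p}" and q: "q \<in> {p. h (fst p) < snd p}"
    and uv: "0 \<le> u" "0 \<le> v" "u + v = 1"
  have "h (u *\<^sub>R fst p + v *\<^sub>R fst q) \<le> u * h (fst p) + v * h (fst q)"
    using assms uv unfolding convex_on_def by blast
  also have "\<dots> < u * snd p + v * snd q"
    using p q uv by (cases "u = 0") (auto intro!: add_less_le_mono mult_strict_left_mono mult_left_mono)
  finally show "u *\<^sub>R p + v *\<^sub>R q \<in> {p. h (fst p) < snd p}" by simp
qed

lemma linear_kron_id: "linear (kron_id U)"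
  by (rule linearI)
    (simp_all add: kron_id_def vec_eq_iff sum.distrib scaleR_add_right scaleR_sum_right mult_ac)

lemma convex_min_linear_constraint_multiplier:
  fixes h :: "'a::euclidean_space \<Rightarrow> real" and L :: "'a \<Rightarrow> 'b::euclidean_space"
  assumes h: "convex_on UNIV h" and L: "linear L" and "L x0 = 0"
    and min: "\<And>x. L x = 0 \<Longrightarrow> h x0 \<le> h x"
  obtains s where "\<And>x. h x0 \<le> h x + s \<bullet> L x"
proof -
  define M where "M = (\<lambda>(x, t). (L x, t::real))"
  define S where "S = M ` {p. h (fst p) - h x0 < snd p}"
  have "linear M"
    unfolding M_def by (rule linearI) (auto simp: linear_add[OF L] linear_scale[OF L])
  have S_iff: "(b, t) \<in> S \<longleftrightarrow> (\<exists>x. b = L x \<and> h x - h x0 < t)" for b t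
    unfolding S_def M_def by force
  have "convex S"
    unfolding S_def using \<open>linear M\<close> h
    by (intro convex_linear_image convex_strict_epigraph convex_on_diff) (auto simp: concave_on_const)
  moreover have "S \<noteq> {}"
    using S_iff[of 0 1] \<open>L x0 = 0\<close> by auto
  moreover have "0 \<notin> S"
    using S_iff[of 0 0] min by (force simp: zero_prod_def)
  ultimately obtain a where "a \<in> span S" "a \<noteq> 0" and sep: "\<And>p. p \<in> S \<Longrightarrow> 0 \<le> a \<bullet> p"
    using separating_hyperplane_set_0_inspan by blast
  obtain b c where a: "a = (b, c)" by fastforce
  have sep': "0 \<le> b \<bullet> L x + c * t" if "h x - h x0 < t" for x t
    using sep[of "(L x, t)"] S_iff that by (auto simp: a)
  have "c \<ge> 0"
    using sep'[of x0 1] \<open>L x0 = 0\<close> by simp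
  have "a \<in> M ` span {p. h (fst p) - h x0 < snd p}"
    using \<open>a \<in> span S\<close> span_linear_image[OF \<open>linear M\<close>] unfolding S_def by blast
  then obtain z where b: "b = L z"
    unfolding a M_def by auto
  have "c \<noteq> 0"
  proof
    assume "c = 0"
    then have "0 \<le> b \<bullet> L (- z)"
      using sep'[of "- z" "h (- z) - h x0 + 1"] by simp
    then have "b \<bullet> b \<le> 0"
      using b by (simp add: linear_neg[OF L])
    then have "b = 0"
      by (metis inner_gt_zero_iff not_le)
    with \<open>c = 0\<close> \<open>a \<noteq> 0\<close> a show False by (simp add: zero_prod_def)
  qed
  with \<open>c \<ge> 0\<close> have "c > 0" by simp
  show ?thesis
  proof (rule that[of "b /\<^sub>R c"], rule field_le_epsilon)
    fix x and e :: real assume "0 < e"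
    then have "0 \<le> b \<bullet> L x + c * (h x - h x0 + e)"
      using sep' by simp
    then show "h x0 \<le> h x + (b /\<^sub>R c) \<bullet> L x + e"
      using \<open>c > 0\<close> by (simp add: field_simps)
  qed
qed

lemma saddle_L_imp_saddle_P:
  fixes Phi :: "real^'dx::finite^'m::finite \<Rightarrow> real^'dy::finite^'m \<Rightarrow> real"
  assumes "saddle_L U Phi xs ys Sx Sy"
  shows "saddle_P U Phi xs ys"
proof -
  have min: "\<And>x Sy'. lagr U Phi xs ys Sx Sy \<le> lagr U Phi x ys Sx Sy'"
    and max: "\<And>y Sx'. lagr U Phi xs y Sx' Sy \<le> lagr U Phi xs ys Sx Sy"
    using assms unfolding saddle_L_def by blast+
  have "kron_id U ys \<bullet> kron_id U ys \<le> 0"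
    using min[of xs "Sy - kron_id U ys"] unfolding lagr_def by (simp add: inner_diff_left)
  then have ys_feasible: "kron_id U ys = 0"
    by (metis inner_gt_zero_iff not_le)
  have "kron_id U xs \<bullet> kron_id U xs \<le> 0"
    using max[of ys "Sx + kron_id U xs"] unfolding lagr_def by (simp add: inner_add_left)
  then have xs_feasible: "kron_id U xs = 0"
    by (metis inner_gt_zero_iff not_le)
  show ?thesis
    unfolding saddle_P_def
  proof (intro conjI allI impI xs_feasible ys_feasible)
    fix x :: "real^'dx^'m" assume "kron_id U x = 0"
    then show "Phi xs ys \<le> Phi x ys"
      using min[of x Sy] xs_feasible ys_feasible unfolding lagr_def by simp
  next
    fix y :: "real^'dy^'m" assume "kron_id U y = 0"
    then show "Phi xs y \<le> Phi xs ys"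
      using max[of y Sx] xs_feasible ys_feasible unfolding lagr_def by simp
  qed
qed

lemma saddle_P_imp_saddle_L:
  fixes Phi :: "real^'dx::finite^'m::finite \<Rightarrow> real^'dy::finite^'m \<Rightarrow> real"
  assumes "saddle_P U Phi xs ys"
    and "convex_on UNIV (\<lambda>x. Phi x ys)" and "concave_on UNIV (\<lambda>y. Phi xs y)"
  obtains Sx Sy where "saddle_L U Phi xs ys Sx Sy"
proof -
  have xs_feasible: "kron_id U xs = 0" and ys_feasible: "kron_id U ys = 0"
    and min: "\<And>x. kron_id U x = 0 \<Longrightarrow> Phi xs ys \<le> Phi x ys"
    and max: "\<And>y. kron_id U y = 0 \<Longrightarrow> - Phi xs ys \<le> - Phi xs y"
    using assms(1) unfolding saddle_P_def by auto
  obtain Sx where Sx: "\<And>x. Phi xs ys \<le> Phi x ys + Sx \<bullet> kron_id U x"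
    using convex_min_linear_constraint_multiplier[OF assms(2) linear_kron_id xs_feasible min]
    by blast
  obtain Sy where Sy: "\<And>y. - Phi xs ys \<le> - Phi xs y + Sy \<bullet> kron_id U y"
    using convex_min_linear_constraint_multiplier[OF assms(3)[unfolded concave_on_def]
        linear_kron_id ys_feasible max]
    by blast
  have "saddle_L U Phi xs ys Sx (- Sy)"
    unfolding saddle_L_def lagr_def xs_feasible ys_feasible
  proof (intro conjI allI)
    fix x :: "real^'dx^'m" and Sy' :: "real^'dy^'m"
    show "Phi xs ys + Sx \<bullet> 0 + - Sy \<bullet> 0 \<le> Phi x ys + Sx \<bullet> kron_id U x + Sy' \<bullet> 0"
      using Sx[of x] by simp
  next
    fix y :: "real^'dy^'m" and Sx' :: "real^'dx^'m"
    show "Phi xs y + Sx' \<bullet> 0 + - Sy \<bullet> kron_id U y \<le> Phi xs ys + Sx \<bullet> 0 + - Sy \<bullet> 0"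
      using Sy[of y] by simp
  qed
  then show ?thesis by (rule that)
qed

theorem theorem1:
  fixes E :: "('m::finite \<times> 'm) set"
    and W U :: "real^'m^'m"
    and f :: "'m \<Rightarrow> real^'dx::finite \<Rightarrow> real^'dy::finite \<Rightarrow> real"
    and g :: "real^'dx \<Rightarrow> real" and r :: "real^'dy \<Rightarrow> real"
    and mu_x mu_y :: real
    and xs :: "real^'dx^'m" and ys :: "real^'dy^'m"
  assumes m2: "CARD('m) \<ge> 2"
    and E_sym: "sym E" and E_irrefl: "irrefl E"
    and E_conn: "\<forall>i j. i \<noteq> j \<longrightarrow> (i, j) \<in> E\<^sup>+"
    and W_sym: "transpose W = W"
    and W_nonneg: "\<forall>i j. W $ i $ j \<ge> 0"
    and W_rows: "\<forall>i. (\<Sum>j\<in>UNIV. W $ i $ j) = 1"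
    and W_pat: "\<forall>i j. i \<noteq> j \<longrightarrow> (W $ i $ j > 0 \<longleftrightarrow> (i, j) \<in> E)"
    and W_diag: "\<forall>i. W $ i $ i > 0"
    and W_eig: "\<forall>l. is_eigenvalue W l \<longrightarrow> -1 < l \<and> l \<le> 1"
    and W_eig1: "dim {v :: real^'m. W *v v = v} = 1"
    and U_sym: "transpose U = U"
    and U_psd: "\<forall>v. inner v (U *v v) \<ge> 0"
    and U_sq: "U ** U = mat 1 - W"
    and mu_pos: "mu_x > 0" "mu_y > 0"
    and f_diff: "\<forall>i p. (\<lambda>(x, y). f i x y) differentiable at p"
    and f_cvx: "\<forall>i y. strongly_convex mu_x (\<lambda>x. f i x y)"
    and f_ccv: "\<forall>i x. strongly_concave mu_y (\<lambda>y. f i x y)"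
    and g_cvx: "convex_on UNIV g" and r_cvx: "convex_on UNIV r"
  shows "saddle_P U (\<lambda>x y. (\<Sum>i\<in>UNIV. f i (x $ i) (y $ i)) + (\<Sum>i\<in>UNIV. g (x $ i))
                            - (\<Sum>i\<in>UNIV. r (y $ i))) xs ys
     \<longleftrightarrow> (\<exists>Sxs Sys. saddle_L U (\<lambda>x y. (\<Sum>i\<in>UNIV. f i (x $ i) (y $ i)) + (\<Sum>i\<in>UNIV. g (x $ i))
                            - (\<Sum>i\<in>UNIV. r (y $ i))) xs ys Sxs Sys)"
proof -
  let ?Phi = "\<lambda>x y. (\<Sum>i\<in>UNIV. f i (x $ i) (y $ i)) + (\<Sum>i\<in>UNIV. g (x $ i))
    - (\<Sum>i\<in>UNIV. r (y $ i))"
  have "convex_on UNIV (\<lambda>a. f i a (ys $ i))" for i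
    using f_cvx mu_pos(1) by (intro strongly_convex_imp_convex_on[of mu_x]) auto
  then have convex_x: "convex_on UNIV (\<lambda>x. ?Phi x ys)"
    using convex_on_sum_blocks[of "\<lambda>i a. f i a (ys $ i)"] convex_on_sum_blocks[of "\<lambda>i. g"] g_cvx
    by (intro convex_on_diff convex_on_add) (auto simp: concave_on_const)
  have "concave_on UNIV (\<lambda>b. f i (xs $ i) b)" for i
    using f_ccv mu_pos(2) by (intro strongly_concave_imp_concave_on[of mu_y]) auto
  then have concave_y: "concave_on UNIV (\<lambda>y. ?Phi xs y)"
    using concave_on_sum_blocks[of "\<lambda>i. f i (xs $ i)"] convex_on_sum_blocks[of "\<lambda>i. r"] r_cvx
    by (intro concave_on_diff concave_on_add) (auto simp: concave_on_const)
  show ?thesis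
  proof
    assume "saddle_P U ?Phi xs ys"
    then obtain Sx Sy where "saddle_L U ?Phi xs ys Sx Sy"
      by (rule saddle_P_imp_saddle_L[OF _ convex_x concave_y])
    then show "\<exists>Sxs Sys. saddle_L U ?Phi xs ys Sxs Sys" by blast
  qed (blast intro: saddle_L_imp_saddle_P)
qed

end
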